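(* Let $P$ be a program and $G$ a goal. Suppose every infinite SLD derivation of $G$ in $P$ (under arbitrary selection of atoms) is pruned by $EVR_L$. Then there is a finite bound $l$ such that every resolvent $R$ occurring in any SLD derivation of $G$ in $P$ satisfies $\#R\le l$.
   Context: Goals are finite lists of atoms; $\#R$ is the number of atoms of $R$; $=_L$ denotes equality of goals as lists. A clause is $h\leftarrow B$; a program is a finite set of clauses. If $G=a_1,\dots,a_k$, $c=(h\leftarrow B)$, $\xi$ a renaming and $\theta$ an idempotent relevant mgu of $h\xi$ and some $a_i$, then $(a_1,\dots,a_{i-1},B\xi,a_{i+1},\dots,a_k)\theta$ is a resolvent. An SLD derivation of $G_0$ in $P$ is a finite or infinite sequence $G_0\xrightarrow{c_0\xi_0,\theta_0}G_1\xrightarrow{c_1\xi_1,\theta_1}\cdots$ of such steps with $c_j\in P$ and $var(c_j\xi_j)\cap(var(G_0)\cup var(c_0\xi_0)\cup\dots\cup var(c_{j-1}\xi_{j-1}))=\emptyset$; the selected atom at each step is arbitrary. $EVR_L$ (Equality Variant of Resultant as Lists) check: a derivation $G_0\xrightarrow{\theta_0}G_1\xrightarrow{\theta_1}\cdots$ is pruned by $EVR_L$ if there exist indices $0\le i<j$ and a renaming $\tau$ with $G_0\theta_0\cdots\theta_{j-1}=G_0\theta_0\cdots\theta_{i-1}\tau$ and $G_j=_L G_i\tau$. *)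

theory Defs
  imports Main
begin

datatype ('f, 'v) trm = Var 'v | Fn 'f "('f, 'v) trm list"

datatype ('p, 'f, 'v) atom = Atom 'p "('f, 'v) trm list"

type_synonym ('f, 'v) subst = "'v \<Rightarrow> ('f, 'v) trm"

type_synonym ('p, 'f, 'v) goal = "('p, 'f, 'v) atom list"

text \<open>A clause h <- B is a pair (head, body).\<close>
type_synonym ('p, 'f, 'v) clause = "('p, 'f, 'v) atom \<times> ('p, 'f, 'v) atom list"

fun subst_trm :: "('f, 'v) subst \<Rightarrow> ('f, 'v) trm \<Rightarrow> ('f, 'v) trm" where
  "subst_trm \<sigma> (Var x) = \<sigma> x"
| "subst_trm \<sigma> (Fn f ts) = Fn f (map (subst_trm \<sigma>) ts)"

fun vars_trm :: "('f, 'v) trm \<Rightarrow> 'v set" where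
  "vars_trm (Var x) = {x}"
| "vars_trm (Fn f ts) = \<Union> (set (map vars_trm ts))"

fun subst_atom :: "('f, 'v) subst \<Rightarrow> ('p, 'f, 'v) atom \<Rightarrow> ('p, 'f, 'v) atom" where
  "subst_atom \<sigma> (Atom p ts) = Atom p (map (subst_trm \<sigma>) ts)"

fun vars_atom :: "('p, 'f, 'v) atom \<Rightarrow> 'v set" where
  "vars_atom (Atom p ts) = \<Union> (set (map vars_trm ts))"

definition subst_goal :: "('f, 'v) subst \<Rightarrow> ('p, 'f, 'v) goal \<Rightarrow> ('p, 'f, 'v) goal" where
  "subst_goal \<sigma> G = map (subst_atom \<sigma>) G"

definition vars_goal :: "('p, 'f, 'v) goal \<Rightarrow> 'v set" where
  "vars_goal G = \<Union> (set (map vars_atom G))"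

definition subst_clause :: "('f, 'v) subst \<Rightarrow> ('p, 'f, 'v) clause \<Rightarrow> ('p, 'f, 'v) clause" where
  "subst_clause \<sigma> c = (subst_atom \<sigma> (fst c), subst_goal \<sigma> (snd c))"

definition vars_clause :: "('p, 'f, 'v) clause \<Rightarrow> 'v set" where
  "vars_clause c = vars_atom (fst c) \<union> vars_goal (snd c)"

text \<open>Composition: applying (comp_subst s t) means first s, then t.\<close>
definition comp_subst :: "('f, 'v) subst \<Rightarrow> ('f, 'v) subst \<Rightarrow> ('f, 'v) subst" where
  "comp_subst \<sigma> \<tau> = (\<lambda>x. subst_trm \<tau> (\<sigma> x))"

definition dom_subst :: "('f, 'v) subst \<Rightarrow> 'v set" where
  "dom_subst \<sigma> = {x. \<sigma> x \<noteq> Var x}"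

definition vars_subst :: "('f, 'v) subst \<Rightarrow> 'v set" where
  "vars_subst \<sigma> = dom_subst \<sigma> \<union> (\<Union>x\<in>dom_subst \<sigma>. vars_trm (\<sigma> x))"

definition renaming :: "('f, 'v) subst \<Rightarrow> bool" where
  "renaming \<xi> \<longleftrightarrow> (\<exists>\<pi>. bij \<pi> \<and> \<xi> = (\<lambda>x. Var (\<pi> x)))"

definition unifier :: "('f, 'v) subst \<Rightarrow> ('p, 'f, 'v) atom \<Rightarrow> ('p, 'f, 'v) atom \<Rightarrow> bool" where
  "unifier \<theta> a b \<longleftrightarrow> subst_atom \<theta> a = subst_atom \<theta> b"

definition mgu :: "('f, 'v) subst \<Rightarrow> ('p, 'f, 'v) atom \<Rightarrow> ('p, 'f, 'v) atom \<Rightarrow> bool" where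
  "mgu \<theta> a b \<longleftrightarrow> unifier \<theta> a b \<and>
     (\<forall>\<sigma>. unifier \<sigma> a b \<longrightarrow> (\<exists>\<delta>. \<sigma> = comp_subst \<theta> \<delta>))"

definition idempotent :: "('f, 'v) subst \<Rightarrow> bool" where
  "idempotent \<theta> \<longleftrightarrow> comp_subst \<theta> \<theta> = \<theta>"

definition relevant :: "('f, 'v) subst \<Rightarrow> ('p, 'f, 'v) atom \<Rightarrow> ('p, 'f, 'v) atom \<Rightarrow> bool" where
  "relevant \<theta> a b \<longleftrightarrow> vars_subst \<theta> \<subseteq> vars_atom a \<union> vars_atom b"

definition sld_step ::
  "('p, 'f, 'v) clause set \<Rightarrow> ('p, 'f, 'v) goal \<Rightarrow> ('p, 'f, 'v) clause \<Rightarrow> ('f, 'v) subst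
   \<Rightarrow> ('f, 'v) subst \<Rightarrow> ('p, 'f, 'v) goal \<Rightarrow> bool" where
  "sld_step P G c \<xi> \<theta> G' \<longleftrightarrow> c \<in> P \<and> renaming \<xi> \<and>
     (\<exists>i < length G.
        idempotent \<theta> \<and> mgu \<theta> (subst_atom \<xi> (fst c)) (G ! i) \<and>
        relevant \<theta> (subst_atom \<xi> (fst c)) (G ! i) \<and>
        G' = subst_goal \<theta> (take i G @ subst_goal \<xi> (snd c) @ drop (Suc i) G))"

text \<open>The first n steps of an SLD derivation G 0 -> G 1 -> ... -> G n of G0 in P
  (a finite derivation of length n, or the length-n prefix of a longer one),
  including the standardization-apart condition.\<close>
definition sld_derivation_upto ::
  "('p, 'f, 'v) clause set \<Rightarrow> ('p, 'f, 'v) goal \<Rightarrow> nat \<Rightarrow> (nat \<Rightarrow> ('p, 'f, 'v) goal)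
   \<Rightarrow> (nat \<Rightarrow> ('p, 'f, 'v) clause) \<Rightarrow> (nat \<Rightarrow> ('f, 'v) subst) \<Rightarrow> (nat \<Rightarrow> ('f, 'v) subst) \<Rightarrow> bool" where
  "sld_derivation_upto P G0 n G c \<xi> \<theta> \<longleftrightarrow> G 0 = G0 \<and>
     (\<forall>j < n. sld_step P (G j) (c j) (\<xi> j) (\<theta> j) (G (Suc j)) \<and>
        vars_clause (subst_clause (\<xi> j) (c j)) \<inter>
          (vars_goal G0 \<union> (\<Union>k<j. vars_clause (subst_clause (\<xi> k) (c k)))) = {})"

definition sld_derivation_inf ::
  "('p, 'f, 'v) clause set \<Rightarrow> ('p, 'f, 'v) goal \<Rightarrow> (nat \<Rightarrow> ('p, 'f, 'v) goal)
   \<Rightarrow> (nat \<Rightarrow> ('p, 'f, 'v) clause) \<Rightarrow> (nat \<Rightarrow> ('f, 'v) subst) \<Rightarrow> (nat \<Rightarrow> ('f, 'v) subst) \<Rightarrow> bool" where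
  "sld_derivation_inf P G0 G c \<xi> \<theta> \<longleftrightarrow> (\<forall>n. sld_derivation_upto P G0 n G c \<xi> \<theta>)"

fun comp_upto :: "(nat \<Rightarrow> ('f, 'v) subst) \<Rightarrow> nat \<Rightarrow> ('f, 'v) subst" where
  "comp_upto \<theta> 0 = Var"
| "comp_upto \<theta> (Suc k) = comp_subst (comp_upto \<theta> k) (\<theta> k)"

definition pruned_EVR_L ::
  "('p, 'f, 'v) goal \<Rightarrow> (nat \<Rightarrow> ('p, 'f, 'v) goal) \<Rightarrow> (nat \<Rightarrow> ('f, 'v) subst) \<Rightarrow> bool" where
  "pruned_EVR_L G0 G \<theta> \<longleftrightarrow> (\<exists>i j \<tau>. i < j \<and> renaming \<tau> \<and>
     subst_goal (comp_upto \<theta> j) G0 = subst_goal \<tau> (subst_goal (comp_upto \<theta> i) G0) \<and>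
     G j = subst_goal \<tau> (G i))"

end

theory Submission
  imports Defs
begin

text \<open>
  The skeleton of a derivation records, step by step, the position of the selected atom and
  the program clause used. Derivations with the same skeleton have resultants that are variants
  of each other, so whether a derivation contains an \<open>EVR_L\<close> loop depends only on its skeleton.
  The skeletons of loop-free derivations form a tree that is finitely branching, because there
  are finitely many clauses and the goal length is determined by the skeleton. Cutting out loops
  turns any derivation into a loop-free one whose last resultant is a variant of the original
  one; as a goal grows by a bounded number of atoms per step, unbounded goal lengths make the tree
  infinite. Koenig's lemma then yields an infinite branch, and realizing it step by step gives an
  infinite derivation that is never pruned.
\<close>

section \<open>Substitutions\<close>

lemma map_eq_selfD: "map f xs = xs \<Longrightarrow> x \<in> set xs \<Longrightarrow> f x = x"
  by (metis map_eq_conv map_ident)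

lemma subst_trm_comp_subst: "subst_trm (comp_subst \<sigma> \<tau>) t = subst_trm \<tau> (subst_trm \<sigma> t)"
  by (induction t) (auto simp: comp_subst_def)

lemma subst_trm_Var [simp]: "subst_trm Var t = t"
  by (induction t) (auto simp: map_idI)

lemma subst_trm_cong: "(\<And>x. x \<in> vars_trm t \<Longrightarrow> \<sigma> x = \<tau> x) \<Longrightarrow> subst_trm \<sigma> t = subst_trm \<tau> t"
  by (induction t) auto

lemma vars_trm_subst_trm: "vars_trm (subst_trm \<sigma> t) = (\<Union>x\<in>vars_trm t. vars_trm (\<sigma> x))"
  by (induction t) auto

lemma subst_trm_fixes_vars: "subst_trm \<sigma> t = t \<Longrightarrow> x \<in> vars_trm t \<Longrightarrow> \<sigma> x = Var x"
proof (induction t)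
  case (Fn f ts)
  then obtain t where t: "t \<in> set ts" "x \<in> vars_trm t" by auto
  with Fn.prems(1) have "subst_trm \<sigma> t = t" by (auto intro: map_eq_selfD)
  with t Fn.IH show ?case by blast
qed simp

lemma finite_vars_trm [simp]: "finite (vars_trm t)"
  by (induction t) auto

lemma finite_vars_atom [simp]: "finite (vars_atom a)"
  by (cases a) auto

lemma subst_atom_comp_subst: "subst_atom (comp_subst \<sigma> \<tau>) a = subst_atom \<tau> (subst_atom \<sigma> a)"
  by (cases a) (simp add: subst_trm_comp_subst)

lemma subst_atom_Var [simp]: "subst_atom Var a = a"
  by (cases a) (simp add: map_idI)

lemma subst_atom_cong: "(\<And>x. x \<in> vars_atom a \<Longrightarrow> \<sigma> x = \<tau> x) \<Longrightarrow> subst_atom \<sigma> a = subst_atom \<tau> a"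
  by (cases a) (auto intro!: subst_trm_cong)

lemma vars_atom_subst_atom: "vars_atom (subst_atom \<sigma> a) = (\<Union>x\<in>vars_atom a. vars_trm (\<sigma> x))"
  by (cases a) (auto simp: vars_trm_subst_trm)

lemma subst_atom_fixes_vars: "subst_atom \<sigma> a = a \<Longrightarrow> x \<in> vars_atom a \<Longrightarrow> \<sigma> x = Var x"
  by (cases a) (auto dest: map_eq_selfD intro: subst_trm_fixes_vars)

lemma subst_goal_comp_subst: "subst_goal (comp_subst \<sigma> \<tau>) G = subst_goal \<tau> (subst_goal \<sigma> G)"
  by (simp add: subst_goal_def subst_atom_comp_subst)

lemma subst_goal_Var [simp]: "subst_goal Var G = G"
  by (simp add: subst_goal_def map_idI)

lemma subst_goal_cong: "(\<And>x. x \<in> vars_goal G \<Longrightarrow> \<sigma> x = \<tau> x) \<Longrightarrow> subst_goal \<sigma> G = subst_goal \<tau> G"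
  by (auto simp: subst_goal_def vars_goal_def intro!: subst_atom_cong)

lemma vars_goal_subst_goal: "vars_goal (subst_goal \<sigma> G) = (\<Union>x\<in>vars_goal G. vars_trm (\<sigma> x))"
  by (auto simp: subst_goal_def vars_goal_def vars_atom_subst_atom)

lemma subst_goal_fixes_vars: "subst_goal \<sigma> G = G \<Longrightarrow> x \<in> vars_goal G \<Longrightarrow> \<sigma> x = Var x"
  by (auto simp: subst_goal_def vars_goal_def dest: map_eq_selfD intro: subst_atom_fixes_vars)

lemma finite_vars_goal [simp]: "finite (vars_goal G)"
  by (simp add: vars_goal_def)

lemma subst_goal_simps [simp]:
  "subst_goal \<sigma> (G @ H) = subst_goal \<sigma> G @ subst_goal \<sigma> H"
  "length (subst_goal \<sigma> G) = length G"
  "i < length G \<Longrightarrow> subst_goal \<sigma> G ! i = subst_atom \<sigma> (G ! i)"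
  "take i (subst_goal \<sigma> G) = subst_goal \<sigma> (take i G)"
  "drop i (subst_goal \<sigma> G) = subst_goal \<sigma> (drop i G)"
  by (simp_all add: subst_goal_def take_map drop_map)

lemma vars_goal_append [simp]: "vars_goal (G @ H) = vars_goal G \<union> vars_goal H"
  by (simp add: vars_goal_def)

lemma vars_atom_nth_subset: "i < length G \<Longrightarrow> vars_atom (G ! i) \<subseteq> vars_goal G"
  by (auto simp: vars_goal_def intro: nth_mem)

lemma comp_subst_assoc: "comp_subst (comp_subst \<sigma> \<tau>) \<upsilon> = comp_subst \<sigma> (comp_subst \<tau> \<upsilon>)"
  by (rule ext) (simp add: comp_subst_def subst_trm_comp_subst[unfolded comp_subst_def])

lemma comp_subst_Var [simp]: "comp_subst Var \<sigma> = \<sigma>" "comp_subst \<sigma> Var = \<sigma>"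
  by (simp_all add: comp_subst_def)

lemma subst_clause_cong: "(\<And>x. x \<in> vars_clause c \<Longrightarrow> \<sigma> x = \<tau> x) \<Longrightarrow> subst_clause \<sigma> c = subst_clause \<tau> c"
  by (simp add: subst_clause_def vars_clause_def cong: subst_atom_cong subst_goal_cong)

lemma vars_clause_subst_clause:
  "vars_clause (subst_clause \<sigma> c) = (\<Union>x\<in>vars_clause c. vars_trm (\<sigma> x))"
  by (auto simp: subst_clause_def vars_clause_def vars_atom_subst_atom vars_goal_subst_goal)

lemma finite_vars_clause [simp]: "finite (vars_clause c)"
  by (simp add: vars_clause_def)

section \<open>Renamings\<close>

lemma renaming_Var: "renaming Var"
  unfolding renaming_def by (rule exI[of _ id]) auto

lemma renaming_comp_subst: "renaming \<rho> \<Longrightarrow> renaming \<sigma> \<Longrightarrow> renaming (comp_subst \<rho> \<sigma>)"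
proof -
  assume "renaming \<rho>" "renaming \<sigma>"
  then obtain \<pi> \<pi>' where "bij \<pi>" "\<rho> = (\<lambda>x. Var (\<pi> x))" "bij \<pi>'" "\<sigma> = (\<lambda>x. Var (\<pi>' x))"
    unfolding renaming_def by blast
  then show ?thesis
    unfolding renaming_def comp_subst_def by (intro exI[of _ "\<pi>' \<circ> \<pi>"]) (simp add: bij_comp)
qed

lemma comp_subst_renaming_inv:
  assumes "bij \<pi>"
  shows "comp_subst (\<lambda>x. Var (\<pi> x)) (\<lambda>x. Var (inv \<pi> x)) = Var"
    and "comp_subst (\<lambda>x. Var (inv \<pi> x)) (\<lambda>x. Var (\<pi> x)) = Var"
  using assms by (simp_all add: comp_subst_def bij_is_inj bij_is_surj surj_f_inv_f)

lemma renaming_inverse: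
  assumes "renaming \<rho>"
  obtains \<rho>' where "renaming \<rho>'" "comp_subst \<rho> \<rho>' = Var" "comp_subst \<rho>' \<rho> = Var"
proof -
  obtain \<pi> where "bij \<pi>" "\<rho> = (\<lambda>x. Var (\<pi> x))" using assms renaming_def by blast
  then show thesis
    using that[of "\<lambda>x. Var (inv \<pi> x)"] comp_subst_renaming_inv bij_imp_bij_inv
    by (auto simp: renaming_def)
qed

lemma vars_trm_rename: "vars_trm (subst_trm (\<lambda>x. Var (\<pi> x)) t) = \<pi> ` vars_trm t"
  by (auto simp: vars_trm_subst_trm)

lemma vars_atom_rename: "vars_atom (subst_atom (\<lambda>x. Var (\<pi> x)) a) = \<pi> ` vars_atom a"
  by (auto simp: vars_atom_subst_atom)

lemma vars_goal_rename: "vars_goal (subst_goal (\<lambda>x. Var (\<pi> x)) G) = \<pi> ` vars_goal G"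
  by (auto simp: vars_goal_subst_goal)

lemma vars_clause_rename: "vars_clause (subst_clause (\<lambda>x. Var (\<pi> x)) c) = \<pi> ` vars_clause c"
  by (auto simp: vars_clause_subst_clause)

lemma bij_extend_inj_on:
  fixes f :: "'a \<Rightarrow> 'a"
  assumes "finite A" "inj_on f A"
  obtains \<pi> where "bij \<pi>" "\<And>x. x \<in> A \<Longrightarrow> \<pi> x = f x"
proof -
  let ?B = "f ` A"
  have "card (?B - A) = card ?B - card (?B \<inter> A)" "card (A - ?B) = card A - card (A \<inter> ?B)"
    using assms(1) by (simp_all add: card_Diff_subset_Int)
  then have "card (?B - A) = card (A - ?B)"
    using assms by (simp add: card_image Int_commute)
  then obtain h where h: "bij_betw h (?B - A) (A - ?B)"
    using finite_same_card_bij[of "?B - A" "A - ?B"] assms(1) by blast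
  let ?C = "- (A \<union> ?B)"
  have outside: "bij_betw (\<lambda>x. if x \<in> ?B - A then h x else x) (?B - A \<union> ?C) (A - ?B \<union> ?C)"
    by (rule bij_betw_disjoint_Un[OF h bij_betw_id[unfolded id_def]]) blast+
  have all: "bij_betw (\<lambda>x. if x \<in> A then f x else if x \<in> ?B - A then h x else x)
      (A \<union> (?B - A \<union> ?C)) (?B \<union> (A - ?B \<union> ?C))"
    by (rule bij_betw_disjoint_Un[OF _ outside]) (use assms(2) in \<open>simp add: bij_betw_def\<close>, blast+)
  have "A \<union> (?B - A \<union> ?C) = UNIV" "?B \<union> (A - ?B \<union> ?C) = UNIV"
    by blast+
  with all show thesis by (intro that[of "\<lambda>x. if x \<in> A then f x else if x \<in> ?B - A then h x else x"]) simp_all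
qed

lemma bij_avoiding_finite:
  assumes "infinite (UNIV :: 'a set)" "finite U" "finite V"
  obtains \<pi> :: "'a \<Rightarrow> 'a" where "bij \<pi>" "\<pi> ` V \<inter> U = {}"
proof -
  obtain W where W: "finite W" "card W = card V" "W \<subseteq> - U"
    using infinite_arbitrarily_large[of "- U" "card V"] assms(1,2) by (auto simp: Compl_eq_Diff_UNIV)
  then obtain g where g: "bij_betw g V W"
    using finite_same_card_bij[OF assms(3) W(1)] by metis
  obtain \<pi> where "bij \<pi>" "\<And>x. x \<in> V \<Longrightarrow> \<pi> x = g x"
    using bij_extend_inj_on[OF assms(3) bij_betw_imp_inj_on[OF g]] by blast
  moreover from this have "\<pi> ` V = W" using g by (simp add: bij_betw_def cong: image_cong)
  ultimately show thesis using that W(3) by blast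
qed

lemma bij_glue:
  fixes \<pi> \<alpha> \<beta> :: "'a \<Rightarrow> 'a"
  assumes "bij \<pi>" "bij \<alpha>" "bij \<beta>" "finite S" "finite V"
    and "\<alpha> ` V \<inter> S = {}" "\<beta> ` V \<inter> \<pi> ` S = {}"
  obtains \<eta> where "bij \<eta>" "\<And>x. x \<in> S \<Longrightarrow> \<eta> x = \<pi> x" "\<And>v. v \<in> V \<Longrightarrow> \<eta> (\<alpha> v) = \<beta> v"
proof -
  let ?g = "\<lambda>x. \<beta> (inv \<alpha> x)"
  have inv_\<alpha>: "inv \<alpha> (\<alpha> v) = v" for v
    using assms(2) by (simp add: bij_is_inj)
  have "inj_on \<pi> S"
    using assms(1) bij_is_inj inj_on_subset by blast
  moreover have "inj_on ?g (\<alpha> ` V)"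
    by (rule inj_onI) (metis assms(3) bij_is_inj imageE inj_eq inv_\<alpha>)
  moreover have "\<pi> ` S \<inter> ?g ` \<alpha> ` V = {}"
    using assms(7) by (simp add: image_image inv_\<alpha> Int_commute)
  ultimately have inj: "inj_on (\<lambda>x. if x \<in> S then \<pi> x else ?g x) (S \<union> \<alpha> ` V)"
    by (rule inj_on_disjoint_Un)
  have "finite (S \<union> \<alpha> ` V)"
    using assms(4,5) by simp
  then obtain \<eta> where \<eta>: "bij \<eta>"
      "\<And>x. x \<in> S \<union> \<alpha> ` V \<Longrightarrow> \<eta> x = (if x \<in> S then \<pi> x else ?g x)"
    using bij_extend_inj_on[OF _ inj] by blast
  show thesis
  proof (rule that[OF \<eta>(1)])
    show "\<eta> x = \<pi> x" if "x \<in> S" for x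
      using \<eta>(2) that by simp
    show "\<eta> (\<alpha> v) = \<beta> v" if "v \<in> V" for v
    proof -
      have "\<alpha> v \<notin> S"
        using assms(6) that by blast
      then show ?thesis
        using \<eta>(2)[of "\<alpha> v"] that inv_\<alpha> by simp
    qed
  qed
qed

lemma renaming_glue:
  assumes "renaming \<rho>" "renaming \<xi>" "renaming \<xi>'"
    and "vars_clause (subst_clause \<xi> c) \<inter> vars_goal X = {}"
    and "vars_clause (subst_clause \<xi>' c) \<inter> vars_goal (subst_goal \<rho> X) = {}"
  obtains r where "renaming r" "subst_goal r X = subst_goal \<rho> X"
    "subst_clause (comp_subst \<xi> r) c = subst_clause \<xi>' c"
proof -
  obtain \<pi> \<alpha> \<beta> where \<rho>: "\<rho> = (\<lambda>x. Var (\<pi> x))" and \<xi>: "\<xi> = (\<lambda>x. Var (\<alpha> x))"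
      and \<xi>': "\<xi>' = (\<lambda>x. Var (\<beta> x))" and bij: "bij \<pi>" "bij \<alpha>" "bij \<beta>"
    using assms(1-3) renaming_def by metis
  have "\<alpha> ` vars_clause c \<inter> vars_goal X = {}" "\<beta> ` vars_clause c \<inter> \<pi> ` vars_goal X = {}"
    using assms(4,5) by (simp_all add: \<rho> \<xi> \<xi>' vars_clause_rename vars_goal_rename)
  from bij_glue[OF bij finite_vars_goal finite_vars_clause this]
  obtain \<eta> where \<eta>: "bij \<eta>" "\<And>x. x \<in> vars_goal X \<Longrightarrow> \<eta> x = \<pi> x"
      "\<And>v. v \<in> vars_clause c \<Longrightarrow> \<eta> (\<alpha> v) = \<beta> v"
    by blast
  have "subst_goal (\<lambda>x. Var (\<eta> x)) X = subst_goal \<rho> X"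
    by (rule subst_goal_cong) (simp add: \<rho> \<eta>(2))
  moreover have "subst_clause (comp_subst \<xi> (\<lambda>x. Var (\<eta> x))) c = subst_clause \<xi>' c"
    by (rule subst_clause_cong) (simp add: \<xi> \<xi>' \<eta>(3) comp_subst_def)
  moreover have "renaming (\<lambda>x. Var (\<eta> x))"
    using \<eta>(1) renaming_def by blast
  ultimately show thesis
    using that by blast
qed

lemma variant_if_mutual_instances:
  assumes "subst_goal \<delta> X = Y" "subst_goal \<delta>' Y = X"
  obtains \<rho> where "renaming \<rho>" "subst_goal \<rho> X = Y"
proof -
  have "subst_goal (comp_subst \<delta> \<delta>') X = X"
    using assms by (simp add: subst_goal_comp_subst)
  then have cancel: "subst_trm \<delta>' (\<delta> x) = Var x" if "x \<in> vars_goal X" for x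
    using subst_goal_fixes_vars that by (fastforce simp: comp_subst_def)
  have "\<forall>x\<in>vars_goal X. \<exists>y. \<delta> x = Var y"
    by (metis cancel subst_trm.simps(2) trm.distinct(1) trm.exhaust)
  then obtain g where g: "\<And>x. x \<in> vars_goal X \<Longrightarrow> \<delta> x = Var (g x)"
    by metis
  have "inj_on g (vars_goal X)"
    by (rule inj_onI) (metis cancel g trm.inject(1))
  then obtain \<pi> where \<pi>: "bij \<pi>" "\<And>x. x \<in> vars_goal X \<Longrightarrow> \<pi> x = g x"
    using bij_extend_inj_on finite_vars_goal by blast
  have "subst_goal (\<lambda>x. Var (\<pi> x)) X = Y"
    unfolding assms(1)[symmetric] by (rule subst_goal_cong) (simp add: \<pi>(2) g)
  with \<pi>(1) show thesis using that renaming_def by blast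
qed

lemma mgu_renaming_variant:
  assumes "renaming r" "subst_atom r a = a'" "subst_atom r b = b'" "mgu \<theta> a b" "mgu \<theta>' a' b'"
  obtains \<rho> where "renaming \<rho>" "subst_goal \<rho> (subst_goal \<theta> X) = subst_goal \<theta>' (subst_goal r X)"
proof -
  obtain r' where r': "comp_subst r r' = Var" "comp_subst r' r = Var"
    using renaming_inverse[OF assms(1)] by blast
  have "subst_atom r' a' = a" "subst_atom r' b' = b"
    using assms(2,3) r'(1) by (metis subst_atom_Var subst_atom_comp_subst)+
  have "unifier (comp_subst r \<theta>') a b"
    using assms(2,3,5) by (simp add: mgu_def unifier_def subst_atom_comp_subst)
  then obtain \<delta> where \<delta>: "comp_subst r \<theta>' = comp_subst \<theta> \<delta>"
    using assms(4) mgu_def by blast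
  have "unifier (comp_subst r' \<theta>) a' b'"
    using assms(4) \<open>subst_atom r' a' = a\<close> \<open>subst_atom r' b' = b\<close>
    by (simp add: mgu_def unifier_def subst_atom_comp_subst)
  then obtain \<delta>' where \<delta>': "comp_subst r' \<theta> = comp_subst \<theta>' \<delta>'"
    using assms(5) mgu_def by blast
  have "subst_goal \<delta> (subst_goal \<theta> X) = subst_goal \<theta>' (subst_goal r X)"
    by (simp flip: subst_goal_comp_subst add: \<delta>)
  moreover have "subst_goal \<delta>' (subst_goal \<theta>' (subst_goal r X)) = subst_goal \<theta> X"
    by (metis \<delta>' r'(1) subst_goal_Var subst_goal_comp_subst)
  ultimately show thesis using that variant_if_mutual_instances by blast
qed

definition relevant_mgu :: "('f, 'v) subst \<Rightarrow> ('p, 'f, 'v) atom \<Rightarrow> ('p, 'f, 'v) atom \<Rightarrow> bool" where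
  "relevant_mgu \<theta> a b \<longleftrightarrow> idempotent \<theta> \<and> mgu \<theta> a b \<and> relevant \<theta> a b"

definition conj_subst :: "('v \<Rightarrow> 'v) \<Rightarrow> ('f, 'v) subst \<Rightarrow> ('f, 'v) subst" where
  "conj_subst \<pi> \<theta> = comp_subst (\<lambda>x. Var (inv \<pi> x)) (comp_subst \<theta> (\<lambda>x. Var (\<pi> x)))"

context
  fixes \<pi> :: "'v \<Rightarrow> 'v"
  assumes bij: "bij \<pi>"
begin

lemma comp_subst_conj_subst:
  "comp_subst (\<lambda>x. Var (\<pi> x)) (conj_subst \<pi> \<theta>) = comp_subst \<theta> (\<lambda>x. Var (\<pi> x))"
  by (simp add: conj_subst_def flip: comp_subst_assoc add: comp_subst_renaming_inv[OF bij])

lemma mgu_conj_subst: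
  assumes "mgu \<theta> a b"
  shows "mgu (conj_subst \<pi> \<theta>) (subst_atom (\<lambda>x. Var (\<pi> x)) a) (subst_atom (\<lambda>x. Var (\<pi> x)) b)"
  unfolding mgu_def
proof (intro conjI allI impI)
  let ?r = "\<lambda>x. Var (\<pi> x) :: ('f, 'v) trm" and ?r' = "\<lambda>x. Var (inv \<pi> x) :: ('f, 'v) trm"
  show "unifier (conj_subst \<pi> \<theta>) (subst_atom ?r a) (subst_atom ?r b)"
    using assms unfolding mgu_def unifier_def
    by (metis comp_subst_conj_subst subst_atom_comp_subst)
  fix \<sigma> assume "unifier \<sigma> (subst_atom ?r a) (subst_atom ?r b)"
  then have "unifier (comp_subst ?r \<sigma>) a b"
    by (simp add: unifier_def subst_atom_comp_subst)
  then obtain \<delta> where "comp_subst ?r \<sigma> = comp_subst \<theta> \<delta>"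
    using assms mgu_def by blast
  then have "\<sigma> = comp_subst ?r' (comp_subst \<theta> \<delta>)"
    by (metis comp_subst_assoc comp_subst_renaming_inv(2)[OF bij] comp_subst_Var(1))
  also have "\<dots> = comp_subst ?r' (comp_subst \<theta> (comp_subst (comp_subst ?r ?r') \<delta>))"
    by (simp only: comp_subst_renaming_inv(1)[OF bij] comp_subst_Var(1))
  also have "\<dots> = comp_subst (conj_subst \<pi> \<theta>) (comp_subst ?r' \<delta>)"
    by (simp only: conj_subst_def comp_subst_assoc)
  finally show "\<exists>\<delta>. \<sigma> = comp_subst (conj_subst \<pi> \<theta>) \<delta>" by blast
qed

lemma idempotent_conj_subst: "idempotent \<theta> \<Longrightarrow> idempotent (conj_subst \<pi> \<theta>)"
  unfolding idempotent_def conj_subst_def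
  by (metis comp_subst_assoc comp_subst_renaming_inv(1)[OF bij] comp_subst_Var(1))

lemma vars_subst_conj_subst: "vars_subst (conj_subst \<pi> \<theta>) \<subseteq> \<pi> ` vars_subst \<theta>"
proof -
  have conj: "conj_subst \<pi> \<theta> x = subst_trm (\<lambda>x. Var (\<pi> x)) (\<theta> (inv \<pi> x))" for x
    by (simp add: conj_subst_def comp_subst_def)
  have dom: "inv \<pi> x \<in> dom_subst \<theta>" if "x \<in> dom_subst (conj_subst \<pi> \<theta>)" for x
    using that bij by (auto simp: dom_subst_def conj bij_is_surj surj_f_inv_f)
  have "x \<in> \<pi> ` dom_subst \<theta>" if "x \<in> dom_subst (conj_subst \<pi> \<theta>)" for x
    using dom[OF that] by (rule image_eqI[rotated]) (simp add: bij bij_is_surj surj_f_inv_f)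
  moreover have "vars_trm (conj_subst \<pi> \<theta> x) \<subseteq> \<pi> ` (\<Union>y\<in>dom_subst \<theta>. vars_trm (\<theta> y))"
    if "x \<in> dom_subst (conj_subst \<pi> \<theta>)" for x
    using dom[OF that] by (auto simp: conj vars_trm_rename)
  ultimately show ?thesis
    unfolding vars_subst_def by blast
qed

lemma relevant_conj_subst:
  "relevant \<theta> a b \<Longrightarrow>
    relevant (conj_subst \<pi> \<theta>) (subst_atom (\<lambda>x. Var (\<pi> x)) a) (subst_atom (\<lambda>x. Var (\<pi> x)) b)"
  using vars_subst_conj_subst unfolding relevant_def vars_atom_rename by blast

lemma relevant_mgu_conj_subst:
  "relevant_mgu \<theta> a b \<Longrightarrow>
    relevant_mgu (conj_subst \<pi> \<theta>) (subst_atom (\<lambda>x. Var (\<pi> x)) a) (subst_atom (\<lambda>x. Var (\<pi> x)) b)"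
  by (simp add: relevant_mgu_def mgu_conj_subst idempotent_conj_subst relevant_conj_subst)

end

section \<open>Resolution steps on variant goals\<close>

definition resolvent ::
  "nat \<Rightarrow> ('p, 'f, 'v) goal \<Rightarrow> ('p, 'f, 'v) clause \<Rightarrow> ('f, 'v) subst \<Rightarrow> ('f, 'v) subst \<Rightarrow> ('p, 'f, 'v) goal"
  where "resolvent i G c \<xi> \<theta> = subst_goal \<theta> (take i G @ subst_goal \<xi> (snd c) @ drop (Suc i) G)"

lemma resolvent_append:
  "resolvent (length A + i) (A @ G) c \<xi> \<theta> = subst_goal \<theta> A @ resolvent i G c \<xi> \<theta>"
  by (simp add: resolvent_def)

lemma vars_goal_subst_goal_subset: "vars_goal (subst_goal \<theta> G) \<subseteq> vars_goal G \<union> vars_subst \<theta>"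
  by (auto simp: vars_goal_subst_goal vars_subst_def dom_subst_def) (metis singletonD vars_trm.simps(1))

lemma vars_resolvent_subset:
  assumes "i < length G" "relevant \<theta> (subst_atom \<xi> (fst c)) (G ! i)"
  shows "vars_goal (resolvent i G c \<xi> \<theta>) \<subseteq> vars_goal G \<union> vars_clause (subst_clause \<xi> c)"
proof -
  have "vars_goal (take i G) \<union> vars_goal (drop (Suc i) G) \<subseteq> vars_goal G"
    by (auto simp: vars_goal_def dest: in_set_takeD in_set_dropD)
  moreover have "vars_subst \<theta> \<subseteq> vars_goal G \<union> vars_clause (subst_clause \<xi> c)"
    using assms vars_atom_nth_subset
    by (fastforce simp: relevant_def vars_clause_def subst_clause_def)
  ultimately show ?thesis
    using vars_goal_subst_goal_subset
    by (fastforce simp: resolvent_def vars_clause_def subst_clause_def)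
qed

lemma variant_resolvents:
  assumes "renaming \<rho>" "subst_goal \<rho> X = X'" "i < length X" "renaming \<xi>" "renaming \<xi>'"
    and "vars_clause (subst_clause \<xi> c) \<inter> vars_goal X = {}"
    and "vars_clause (subst_clause \<xi>' c) \<inter> vars_goal X' = {}"
    and "mgu \<theta> (subst_atom \<xi> (fst c)) (X ! i)" "mgu \<theta>' (subst_atom \<xi>' (fst c)) (X' ! i)"
  obtains \<rho>' where "renaming \<rho>'" "subst_goal \<rho>' (resolvent i X c \<xi> \<theta>) = resolvent i X' c \<xi>' \<theta>'"
proof -
  from renaming_glue[OF assms(1,4,5,6) assms(7)[folded assms(2)]]
  obtain r where r: "renaming r" "subst_goal r X = subst_goal \<rho> X"
    "subst_clause (comp_subst \<xi> r) c = subst_clause \<xi>' c"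
    by blast
  have rX: "subst_goal r X = X'"
    using r(2) assms(2) by simp
  have head: "subst_atom r (subst_atom \<xi> (fst c)) = subst_atom \<xi>' (fst c)"
    and body: "subst_goal r (subst_goal \<xi> (snd c)) = subst_goal \<xi>' (snd c)"
    using r(3) by (simp_all add: subst_clause_def subst_atom_comp_subst subst_goal_comp_subst)
  have sel: "subst_atom r (X ! i) = X' ! i"
    using rX assms(3) by auto
  let ?Y = "take i X @ subst_goal \<xi> (snd c) @ drop (Suc i) X"
  have Y: "subst_goal r ?Y = take i X' @ subst_goal \<xi>' (snd c) @ drop (Suc i) X'"
    using body by (simp add: rX[symmetric])
  from mgu_renaming_variant[OF r(1) head sel assms(8,9), of ?Y]
  obtain \<rho>' where "renaming \<rho>'" "subst_goal \<rho>' (subst_goal \<theta> ?Y) = subst_goal \<theta>' (subst_goal r ?Y)"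
    by blast
  then show thesis
    using that unfolding resolvent_def Y by blast
qed

lemma resolution_step_transfer:
  fixes X X' :: "('p, 'f, 'v) goal"
  assumes "infinite (UNIV :: 'v set)" "finite U" "vars_goal X \<subseteq> U"
    and "renaming \<rho>" "subst_goal \<rho> X' = X" "i < length X'" "renaming \<xi>'"
    and "vars_clause (subst_clause \<xi>' c) \<inter> vars_goal X' = {}"
    and "relevant_mgu \<theta>' (subst_atom \<xi>' (fst c)) (X' ! i)"
  obtains \<xi> \<theta> \<rho>' where "renaming \<xi>" "vars_clause (subst_clause \<xi> c) \<inter> U = {}"
    "relevant_mgu \<theta> (subst_atom \<xi> (fst c)) (X ! i)"
    "renaming \<rho>'" "subst_goal \<rho>' (resolvent i X' c \<xi>' \<theta>') = resolvent i X c \<xi> \<theta>"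
proof -
  from bij_avoiding_finite[OF assms(1,2) finite_vars_clause]
  obtain \<alpha> where "bij \<alpha>" "\<alpha> ` vars_clause c \<inter> U = {}"
    by blast
  define \<xi> :: "('f, 'v) subst" where "\<xi> = (\<lambda>x. Var (\<alpha> x))"
  have \<xi>: "renaming \<xi>" "vars_clause (subst_clause \<xi> c) \<inter> U = {}"
    using \<open>bij \<alpha>\<close> \<open>\<alpha> ` vars_clause c \<inter> U = {}\<close>
    by (auto simp: \<xi>_def renaming_def vars_clause_rename)
  then have "vars_clause (subst_clause \<xi> c) \<inter> vars_goal (subst_goal \<rho> X') = {}"
    using assms(3,5) by blast
  from renaming_glue[OF assms(4,7) \<xi>(1) assms(8) this]
  obtain r where r: "renaming r" "subst_goal r X' = subst_goal \<rho> X'"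
    "subst_clause (comp_subst \<xi>' r) c = subst_clause \<xi> c"
    by blast
  have rX: "subst_goal r X' = X"
    using r(2) assms(5) by simp
  obtain \<eta> where \<eta>: "bij \<eta>" "r = (\<lambda>x. Var (\<eta> x))"
    using r(1) renaming_def by blast
  have "subst_atom r (subst_atom \<xi>' (fst c)) = subst_atom \<xi> (fst c)"
    using r(3) by (simp add: subst_clause_def subst_atom_comp_subst)
  moreover have "subst_atom r (X' ! i) = X ! i"
    using rX assms(6) by auto
  \<comment> \<open>the given mgu, transported along \<open>r\<close>, serves for the fresh clause copy\<close>
  ultimately have \<theta>: "relevant_mgu (conj_subst \<eta> \<theta>') (subst_atom \<xi> (fst c)) (X ! i)"
    using relevant_mgu_conj_subst[OF \<eta>(1) assms(9)] by (simp add: \<eta>(2))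
  have "vars_clause (subst_clause \<xi> c) \<inter> vars_goal X = {}"
    using \<xi>(2) assms(3) by blast
  from variant_resolvents[OF assms(4,5,6,7) \<xi>(1) assms(8) this]
    assms(9) \<theta>[unfolded relevant_mgu_def]
  obtain \<rho>' where "renaming \<rho>'"
    "subst_goal \<rho>' (resolvent i X' c \<xi>' \<theta>') = resolvent i X c \<xi> (conj_subst \<eta> \<theta>')"
    unfolding relevant_mgu_def by blast
  with \<xi> \<theta> show thesis
    by (rule that)
qed

section \<open>Resultants of derivations\<close>

definition sld_step_at ::
  "('p, 'f, 'v) clause set \<Rightarrow> ('p, 'f, 'v) goal \<Rightarrow> ('p, 'f, 'v) clause \<Rightarrow> ('f, 'v) subst
   \<Rightarrow> ('f, 'v) subst \<Rightarrow> ('p, 'f, 'v) goal \<Rightarrow> nat \<Rightarrow> bool" where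
  "sld_step_at P G c \<xi> \<theta> G' i \<longleftrightarrow> c \<in> P \<and> renaming \<xi> \<and> i < length G \<and>
     relevant_mgu \<theta> (subst_atom \<xi> (fst c)) (G ! i) \<and> G' = resolvent i G c \<xi> \<theta>"

lemma sld_step_iff_sld_step_at: "sld_step P G c \<xi> \<theta> G' \<longleftrightarrow> (\<exists>i. sld_step_at P G c \<xi> \<theta> G' i)"
  unfolding sld_step_def sld_step_at_def relevant_mgu_def resolvent_def by blast

text \<open>The resultant \<open>G0 \<theta>0 \<dots> \<theta>(n-1) \<leftarrow> G n\<close> is encoded as one list, so that the two equations
  of the \<open>EVR_L\<close> check say that one resultant is a renaming of the other.\<close>

definition resultant ::
  "('p, 'f, 'v) goal \<Rightarrow> (nat \<Rightarrow> ('p, 'f, 'v) goal) \<Rightarrow> (nat \<Rightarrow> ('f, 'v) subst) \<Rightarrow> nat \<Rightarrow> ('p, 'f, 'v) goal"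
  where "resultant G0 G \<theta> n = subst_goal (comp_upto \<theta> n) G0 @ G n"

definition used_vars ::
  "('p, 'f, 'v) goal \<Rightarrow> (nat \<Rightarrow> ('p, 'f, 'v) clause) \<Rightarrow> (nat \<Rightarrow> ('f, 'v) subst) \<Rightarrow> nat \<Rightarrow> 'v set"
  where "used_vars G0 c \<xi> n = vars_goal G0 \<union> (\<Union>k<n. vars_clause (subst_clause (\<xi> k) (c k)))"

lemma finite_used_vars: "finite (used_vars G0 c \<xi> n)"
  by (simp add: used_vars_def)

lemma used_vars_Suc:
  "used_vars G0 c \<xi> (Suc n) = used_vars G0 c \<xi> n \<union> vars_clause (subst_clause (\<xi> n) (c n))"
  by (auto simp: used_vars_def lessThan_Suc)

lemma sld_derivation_upto_Suc:
  "sld_derivation_upto P G0 (Suc n) G c \<xi> \<theta> \<longleftrightarrow> sld_derivation_upto P G0 n G c \<xi> \<theta> \<and>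
     sld_step P (G n) (c n) (\<xi> n) (\<theta> n) (G (Suc n)) \<and>
     vars_clause (subst_clause (\<xi> n) (c n)) \<inter> used_vars G0 c \<xi> n = {}"
  unfolding sld_derivation_upto_def used_vars_def All_less_Suc by blast

lemma sld_derivation_upto_mono:
  "sld_derivation_upto P G0 n G c \<xi> \<theta> \<Longrightarrow> m \<le> n \<Longrightarrow> sld_derivation_upto P G0 m G c \<xi> \<theta>"
  unfolding sld_derivation_upto_def by auto

lemma length_resultant: "length (resultant G0 G \<theta> n) = length G0 + length (G n)"
  by (simp add: resultant_def)

lemma nth_resultant: "i < length (G n) \<Longrightarrow> resultant G0 G \<theta> n ! (length G0 + i) = G n ! i"
  by (simp add: resultant_def nth_append)

lemma resultant_Suc:
  assumes "sld_step_at P (G n) (c n) (\<xi> n) (\<theta> n) (G (Suc n)) i"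
  shows "resultant G0 G \<theta> (Suc n) = resolvent (length G0 + i) (resultant G0 G \<theta> n) (c n) (\<xi> n) (\<theta> n)"
  using assms resolvent_append[of "subst_goal (comp_upto \<theta> n) G0"]
  by (simp add: resultant_def sld_step_at_def subst_goal_comp_subst)

lemma comp_upto_cong: "(\<And>j. j < n \<Longrightarrow> \<theta>' j = \<theta> j) \<Longrightarrow> comp_upto \<theta>' n = comp_upto \<theta> n"
  by (induction n) auto

lemma resultant_cong:
  "G' n = G n \<Longrightarrow> (\<And>j. j < n \<Longrightarrow> \<theta>' j = \<theta> j) \<Longrightarrow> resultant G0 G' \<theta>' n = resultant G0 G \<theta> n"
  using comp_upto_cong[of n \<theta>' \<theta>] by (simp add: resultant_def)

lemma vars_resultant_subset_used_vars:
  assumes "sld_derivation_upto P G0 n G c \<xi> \<theta>" "k \<le> n"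
  shows "vars_goal (resultant G0 G \<theta> k) \<subseteq> used_vars G0 c \<xi> k"
  using assms(2)
proof (induction k)
  case 0
  then show ?case
    using assms(1) by (simp add: sld_derivation_upto_def resultant_def used_vars_def)
next
  case (Suc k)
  have "sld_step P (G k) (c k) (\<xi> k) (\<theta> k) (G (Suc k))"
    using assms(1) Suc.prems by (simp add: sld_derivation_upto_def)
  then obtain i where step: "sld_step_at P (G k) (c k) (\<xi> k) (\<theta> k) (G (Suc k)) i"
    by (auto simp: sld_step_iff_sld_step_at)
  then have "length G0 + i < length (resultant G0 G \<theta> k)"
    "relevant (\<theta> k) (subst_atom (\<xi> k) (fst (c k))) (resultant G0 G \<theta> k ! (length G0 + i))"
    by (simp_all add: sld_step_at_def relevant_mgu_def length_resultant nth_resultant)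
  from vars_resolvent_subset[OF this] show ?case
    using Suc step by (auto simp: resultant_Suc used_vars_Suc)
qed

lemma clause_copy_apart_resultant:
  assumes "sld_derivation_upto P G0 n G c \<xi> \<theta>" "k < n"
  shows "vars_clause (subst_clause (\<xi> k) (c k)) \<inter> vars_goal (resultant G0 G \<theta> k) = {}"
proof -
  have "vars_clause (subst_clause (\<xi> k) (c k)) \<inter> used_vars G0 c \<xi> k = {}"
    using assms unfolding sld_derivation_upto_def used_vars_def by blast
  moreover have "vars_goal (resultant G0 G \<theta> k) \<subseteq> used_vars G0 c \<xi> k"
    using vars_resultant_subset_used_vars[OF assms(1)] assms(2) by simp
  ultimately show ?thesis
    by blast
qed

lemma length_goal_bound:
  assumes "finite P" "sld_derivation_upto P G0 n G c \<xi> \<theta>"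
  shows "k \<le> n \<Longrightarrow> length (G k) \<le> length G0 + k * (\<Sum>d\<in>P. length (snd d))"
proof (induction k)
  case 0
  then show ?case
    using assms(2) by (simp add: sld_derivation_upto_def)
next
  case (Suc k)
  have "sld_step P (G k) (c k) (\<xi> k) (\<theta> k) (G (Suc k))"
    using assms(2) Suc.prems by (simp add: sld_derivation_upto_def)
  then obtain i where step: "sld_step_at P (G k) (c k) (\<xi> k) (\<theta> k) (G (Suc k)) i"
    by (auto simp: sld_step_iff_sld_step_at)
  then have "length (G (Suc k)) \<le> length (G k) + length (snd (c k))"
    by (auto simp: sld_step_at_def resolvent_def)
  also have "length (snd (c k)) \<le> (\<Sum>d\<in>P. length (snd d))"
    using step assms(1) by (auto simp: sld_step_at_def intro: member_le_sum)
  finally show ?case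
    using Suc by simp
qed

section \<open>Skeletons\<close>

definition follows_skeleton ::
  "('p, 'f, 'v) clause set \<Rightarrow> ('p, 'f, 'v) goal \<Rightarrow> (nat \<times> ('p, 'f, 'v) clause) list
   \<Rightarrow> (nat \<Rightarrow> ('p, 'f, 'v) goal) \<Rightarrow> (nat \<Rightarrow> ('p, 'f, 'v) clause) \<Rightarrow> (nat \<Rightarrow> ('f, 'v) subst)
   \<Rightarrow> (nat \<Rightarrow> ('f, 'v) subst) \<Rightarrow> bool" where
  "follows_skeleton P G0 s G c \<xi> \<theta> \<longleftrightarrow> sld_derivation_upto P G0 (length s) G c \<xi> \<theta> \<and>
     (\<forall>j<length s. c j = snd (s ! j) \<and> sld_step_at P (G j) (c j) (\<xi> j) (\<theta> j) (G (Suc j)) (fst (s ! j)))"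

lemma follows_skeleton_Nil: "follows_skeleton P G0 [] G c \<xi> \<theta> \<longleftrightarrow> G 0 = G0"
  by (simp add: follows_skeleton_def sld_derivation_upto_def)

lemma follows_skeleton_snoc:
  "follows_skeleton P G0 (s @ [x]) G c \<xi> \<theta> \<longleftrightarrow> follows_skeleton P G0 s G c \<xi> \<theta> \<and>
     c (length s) = snd x \<and>
     sld_step_at P (G (length s)) (c (length s)) (\<xi> (length s)) (\<theta> (length s)) (G (Suc (length s))) (fst x) \<and>
     vars_clause (subst_clause (\<xi> (length s)) (c (length s))) \<inter> used_vars G0 c \<xi> (length s) = {}"
  unfolding follows_skeleton_def length_append_singleton sld_derivation_upto_Suc
  by (auto simp: nth_append less_Suc_eq sld_step_iff_sld_step_at)

lemma follows_skeleton_snocD: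
  "follows_skeleton P G0 (s @ [x]) G c \<xi> \<theta> \<Longrightarrow> follows_skeleton P G0 s G c \<xi> \<theta>"
  by (simp add: follows_skeleton_snoc)

lemma follows_skeleton_take:
  assumes "follows_skeleton P G0 s G c \<xi> \<theta>" "k \<le> length s"
  shows "follows_skeleton P G0 (take k s) G c \<xi> \<theta>"
proof -
  have "sld_derivation_upto P G0 k G c \<xi> \<theta>"
    using assms sld_derivation_upto_mono by (fastforce simp: follows_skeleton_def)
  moreover have "\<forall>j<k. c j = snd (s ! j) \<and> sld_step_at P (G j) (c j) (\<xi> j) (\<theta> j) (G (Suc j)) (fst (s ! j))"
    using assms unfolding follows_skeleton_def by (meson order_less_le_trans)
  ultimately show ?thesis
    using assms(2) unfolding follows_skeleton_def by (auto simp: min_absorb2)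
qed

lemma follows_skeleton_cong:
  assumes "follows_skeleton P G0 s G c \<xi> \<theta>" "\<And>k. k \<le> length s \<Longrightarrow> G' k = G k"
    and "\<And>k. k < length s \<Longrightarrow> c' k = c k \<and> \<xi>' k = \<xi> k \<and> \<theta>' k = \<theta> k"
  shows "follows_skeleton P G0 s G' c' \<xi>' \<theta>'"
proof -
  have "(sld_step P (G' j) (c' j) (\<xi>' j) (\<theta>' j) (G' (Suc j)) \<and>
      vars_clause (subst_clause (\<xi>' j) (c' j)) \<inter> used_vars G0 c' \<xi>' j = {}) \<and>
      c' j = snd (s ! j) \<and> sld_step_at P (G' j) (c' j) (\<xi>' j) (\<theta>' j) (G' (Suc j)) (fst (s ! j))"
    if j: "j < length s" for j
  proof -
    have "used_vars G0 c' \<xi>' j = used_vars G0 c \<xi> j"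
      using assms(3) j unfolding used_vars_def by (intro arg_cong2[where f = "(\<union>)"] SUP_cong) simp_all
    moreover have "G' j = G j" "G' (Suc j) = G (Suc j)" "c' j = c j" "\<xi>' j = \<xi> j" "\<theta>' j = \<theta> j"
      using assms(2,3) j by simp_all
    moreover have "sld_step P (G j) (c j) (\<xi> j) (\<theta> j) (G (Suc j)) \<and>
        vars_clause (subst_clause (\<xi> j) (c j)) \<inter> used_vars G0 c \<xi> j = {}"
      "c j = snd (s ! j) \<and> sld_step_at P (G j) (c j) (\<xi> j) (\<theta> j) (G (Suc j)) (fst (s ! j))"
      using assms(1) j unfolding follows_skeleton_def sld_derivation_upto_def used_vars_def[symmetric]
      by blast+
    ultimately show ?thesis
      by auto
  qed
  moreover have "G' 0 = G0"
    using assms(1,2) by (simp add: follows_skeleton_def sld_derivation_upto_def)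
  ultimately show ?thesis
    unfolding follows_skeleton_def sld_derivation_upto_def used_vars_def[symmetric] by blast
qed

lemma skeleton_exists:
  "sld_derivation_upto P G0 n G c \<xi> \<theta> \<Longrightarrow> \<exists>s. length s = n \<and> follows_skeleton P G0 s G c \<xi> \<theta>"
proof (induction n)
  case 0
  then show ?case
    by (simp add: follows_skeleton_Nil sld_derivation_upto_def)
next
  case (Suc n)
  then obtain s where s: "length s = n" "follows_skeleton P G0 s G c \<xi> \<theta>"
    by (auto simp: sld_derivation_upto_Suc)
  from Suc.prems obtain i where "sld_step_at P (G n) (c n) (\<xi> n) (\<theta> n) (G (Suc n)) i"
    by (auto simp: sld_derivation_upto_Suc sld_step_iff_sld_step_at)
  with s Suc.prems have "follows_skeleton P G0 (s @ [(i, c n)]) G c \<xi> \<theta>"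
    by (simp add: follows_skeleton_snoc sld_derivation_upto_Suc)
  then show ?case
    using s(1) by (metis length_append_singleton)
qed

lemma same_skeleton_variant_resultants:
  assumes D: "follows_skeleton P G0 s G c \<xi> \<theta>" and D': "follows_skeleton P G0 s G' c' \<xi>' \<theta>'"
  shows "k \<le> length s \<Longrightarrow> \<exists>\<rho>. renaming \<rho> \<and> subst_goal \<rho> (resultant G0 G \<theta> k) = resultant G0 G' \<theta>' k"
proof (induction k)
  case 0
  then show ?case
    using D D' renaming_Var by (auto simp: follows_skeleton_def sld_derivation_upto_def resultant_def)
next
  case (Suc k)
  then obtain \<rho> where \<rho>: "renaming \<rho>" "subst_goal \<rho> (resultant G0 G \<theta> k) = resultant G0 G' \<theta>' k"
    by auto
  let ?i = "fst (s ! k)"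
  have k: "k < length s"
    using Suc.prems by simp
  have "c k = snd (s ! k)" and step: "sld_step_at P (G k) (c k) (\<xi> k) (\<theta> k) (G (Suc k)) ?i"
    using D k unfolding follows_skeleton_def by blast+
  moreover have "c' k = snd (s ! k)" and "sld_step_at P (G' k) (c' k) (\<xi>' k) (\<theta>' k) (G' (Suc k)) ?i"
    using D' k unfolding follows_skeleton_def by blast+
  ultimately have cc: "c' k = c k" and step': "sld_step_at P (G' k) (c' k) (\<xi>' k) (\<theta>' k) (G' (Suc k)) ?i"
    by simp_all
  have apart: "vars_clause (subst_clause (\<xi> k) (c k)) \<inter> vars_goal (resultant G0 G \<theta> k) = {}"
    and apart': "vars_clause (subst_clause (\<xi>' k) (c k)) \<inter> vars_goal (resultant G0 G' \<theta>' k) = {}"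
    using clause_copy_apart_resultant[OF _ k] D D' cc unfolding follows_skeleton_def by metis+
  from variant_resolvents[OF \<rho> _ _ _ apart apart', of "length G0 + ?i" "\<theta> k" "\<theta>' k"] step step'[unfolded cc]
  obtain \<rho>' where "renaming \<rho>'" "subst_goal \<rho>' (resolvent (length G0 + ?i) (resultant G0 G \<theta> k) (c k) (\<xi> k) (\<theta> k))
      = resolvent (length G0 + ?i) (resultant G0 G' \<theta>' k) (c k) (\<xi>' k) (\<theta>' k)"
    by (auto simp: sld_step_at_def relevant_mgu_def length_resultant nth_resultant)
  then show ?case
    using resultant_Suc[where G = G and c = c and \<xi> = \<xi> and \<theta> = \<theta>, OF step]
      resultant_Suc[where G = G' and c = c' and \<xi> = \<xi>' and \<theta> = \<theta>', OF step'] cc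
    by auto
qed

lemma follows_skeleton_append_step:
  assumes D: "follows_skeleton P G0 s G c \<xi> \<theta>"
    and step: "sld_step_at P (G (length s)) (snd x) \<xi>n \<theta>n Gn (fst x)"
    and apart: "vars_clause (subst_clause \<xi>n (snd x)) \<inter> used_vars G0 c \<xi> (length s) = {}"
  shows "follows_skeleton P G0 (s @ [x]) (G(Suc (length s) := Gn)) (c(length s := snd x))
      (\<xi>(length s := \<xi>n)) (\<theta>(length s := \<theta>n))"
    and "resultant G0 (G(Suc (length s) := Gn)) (\<theta>(length s := \<theta>n)) (Suc (length s))
      = resolvent (length G0 + fst x) (resultant G0 G \<theta> (length s)) (snd x) \<xi>n \<theta>n"
proof -
  let ?G = "G(Suc (length s) := Gn)" and ?c = "c(length s := snd x)"
    and ?\<xi> = "\<xi>(length s := \<xi>n)" and ?\<theta> = "\<theta>(length s := \<theta>n)"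
  have step': "sld_step_at P (?G (length s)) (?c (length s)) (?\<xi> (length s)) (?\<theta> (length s))
      (?G (Suc (length s))) (fst x)"
    using step by simp
  have "used_vars G0 ?c ?\<xi> (length s) = used_vars G0 c \<xi> (length s)"
    by (simp add: used_vars_def)
  moreover have "follows_skeleton P G0 s ?G ?c ?\<xi> ?\<theta>"
    by (rule follows_skeleton_cong[OF D]) simp_all
  ultimately show "follows_skeleton P G0 (s @ [x]) ?G ?c ?\<xi> ?\<theta>"
    using step' apart by (simp add: follows_skeleton_snoc)
  show "resultant G0 ?G ?\<theta> (Suc (length s))
      = resolvent (length G0 + fst x) (resultant G0 G \<theta> (length s)) (snd x) \<xi>n \<theta>n"
    using resultant_Suc[where G = ?G and c = ?c and \<xi> = ?\<xi> and \<theta> = ?\<theta>, OF step']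
      resultant_cong[of ?G "length s" G ?\<theta> \<theta>] by simp
qed

lemma follows_skeleton_extend:
  fixes G :: "nat \<Rightarrow> ('p, 'f, 'v) goal"
  assumes inf: "infinite (UNIV :: 'v set)"
    and D: "follows_skeleton P G0 s G c \<xi> \<theta>" and E: "follows_skeleton P G0 (t @ [x]) G2 c2 \<xi>2 \<theta>2"
    and \<rho>: "renaming \<rho>" "subst_goal \<rho> (resultant G0 G2 \<theta>2 (length t)) = resultant G0 G \<theta> (length s)"
  obtains Gn \<xi>n \<theta>n \<rho>' where
    "follows_skeleton P G0 (s @ [x]) (G(Suc (length s) := Gn)) (c(length s := snd x))
       (\<xi>(length s := \<xi>n)) (\<theta>(length s := \<theta>n))"
    "renaming \<rho>'" "subst_goal \<rho>' (resultant G0 G2 \<theta>2 (Suc (length t)))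
       = resultant G0 (G(Suc (length s) := Gn)) (\<theta>(length s := \<theta>n)) (Suc (length s))"
proof -
  define n m i where "n = length s" and "m = length t" and "i = fst x"
  let ?X = "resultant G0 G \<theta> n" and ?X' = "resultant G0 G2 \<theta>2 m" and ?h = "fst (snd x)"
  have c2: "c2 m = snd x" and stepE: "sld_step_at P (G2 m) (c2 m) (\<xi>2 m) (\<theta>2 m) (G2 (Suc m)) i"
    using E by (auto simp: follows_skeleton_snoc m_def i_def)
  have "sld_derivation_upto P G0 (Suc m) G2 c2 \<xi>2 \<theta>2"
    using E by (simp add: follows_skeleton_def m_def)
  from clause_copy_apart_resultant[OF this, of m] c2
  have apartE: "vars_clause (subst_clause (\<xi>2 m) (snd x)) \<inter> vars_goal ?X' = {}"
    by simp
  have derivD: "sld_derivation_upto P G0 n G c \<xi> \<theta>"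
    using D by (simp add: follows_skeleton_def n_def)
  have \<rho>X: "subst_goal \<rho> ?X' = ?X"
    using \<rho>(2) by (simp add: n_def m_def)
  then have len: "length (G n) = length (G2 m)"
    by (metis length_resultant subst_goal_simps(2) add_left_cancel)
  have i: "i < length (G2 m)" "relevant_mgu (\<theta>2 m) (subst_atom (\<xi>2 m) ?h) (?X' ! (length G0 + i))"
    and "snd x \<in> P"
    using stepE c2 by (simp_all add: sld_step_at_def nth_resultant)
  from resolution_step_transfer[OF inf finite_used_vars
      vars_resultant_subset_used_vars[OF derivD order_refl] \<rho>(1) \<rho>X _ _ apartE i(2)] i(1) stepE c2
  obtain \<xi>n \<theta>n \<rho>' where \<xi>n: "renaming \<xi>n" "vars_clause (subst_clause \<xi>n (snd x)) \<inter> used_vars G0 c \<xi> n = {}"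
    and \<theta>n: "relevant_mgu \<theta>n (subst_atom \<xi>n ?h) (?X ! (length G0 + i))"
    and \<rho>': "renaming \<rho>'" "subst_goal \<rho>' (resolvent (length G0 + i) ?X' (snd x) (\<xi>2 m) (\<theta>2 m))
        = resolvent (length G0 + i) ?X (snd x) \<xi>n \<theta>n"
    by (auto simp: sld_step_at_def length_resultant)
  have "sld_step_at P (G n) (snd x) \<xi>n \<theta>n (resolvent i (G n) (snd x) \<xi>n \<theta>n) i"
    using \<open>snd x \<in> P\<close> \<xi>n(1) \<theta>n i(1) len by (simp add: sld_step_at_def nth_resultant)
  note extended = follows_skeleton_append_step[OF D, where x = x,
      unfolded n_def[symmetric] i_def[symmetric], OF this \<xi>n(2)]
  have "resultant G0 G2 \<theta>2 (Suc m) = resolvent (length G0 + i) ?X' (snd x) (\<xi>2 m) (\<theta>2 m)"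
    using resultant_Suc[where G = G2 and c = c2 and \<xi> = \<xi>2 and \<theta> = \<theta>2, OF stepE] c2 by simp
  then show thesis
    using that[OF extended(1)[unfolded n_def] \<rho>'(1)] \<rho>'(2) extended(2) unfolding n_def m_def by simp
qed

section \<open>Loop-free derivations\<close>

definition loop_free :: "('p, 'f, 'v) goal \<Rightarrow> (nat \<Rightarrow> ('p, 'f, 'v) goal) \<Rightarrow> (nat \<Rightarrow> ('f, 'v) subst) \<Rightarrow> nat \<Rightarrow> bool"
  where "loop_free G0 G \<theta> n \<longleftrightarrow> (\<forall>i j \<tau>. i < j \<longrightarrow> j \<le> n \<longrightarrow> renaming \<tau> \<longrightarrow>
    resultant G0 G \<theta> j \<noteq> subst_goal \<tau> (resultant G0 G \<theta> i))"

lemma pruned_EVR_L_iff_resultant: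
  "pruned_EVR_L G0 G \<theta> \<longleftrightarrow>
    (\<exists>i j \<tau>. i < j \<and> renaming \<tau> \<and> resultant G0 G \<theta> j = subst_goal \<tau> (resultant G0 G \<theta> i))"
  by (simp add: pruned_EVR_L_def resultant_def)

lemma loop_free_mono: "loop_free G0 G \<theta> n \<Longrightarrow> k \<le> n \<Longrightarrow> loop_free G0 G \<theta> k"
  unfolding loop_free_def by simp

lemma loop_free_variant:
  assumes "\<And>k. k \<le> n \<Longrightarrow> \<exists>\<rho>. renaming \<rho> \<and> subst_goal \<rho> (resultant G0 G \<theta> k) = resultant G0 G' \<theta>' k"
    and "loop_free G0 G \<theta> n"
  shows "loop_free G0 G' \<theta>' n"
  unfolding loop_free_def
proof (intro allI impI notI)
  fix i j \<tau>
  assume ij: "i < j" "j \<le> n" and "renaming \<tau>"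
    and loop: "resultant G0 G' \<theta>' j = subst_goal \<tau> (resultant G0 G' \<theta>' i)"
  obtain \<rho>i where \<rho>i: "renaming \<rho>i" "subst_goal \<rho>i (resultant G0 G \<theta> i) = resultant G0 G' \<theta>' i"
    using assms(1)[of i] ij by auto
  obtain \<rho>j where \<rho>j: "renaming \<rho>j" "subst_goal \<rho>j (resultant G0 G \<theta> j) = resultant G0 G' \<theta>' j"
    using assms(1)[of j] ij by auto
  obtain \<rho>j' where \<rho>j': "renaming \<rho>j'" "comp_subst \<rho>j \<rho>j' = Var"
    using renaming_inverse[OF \<rho>j(1)] by blast
  have "resultant G0 G \<theta> j = subst_goal \<rho>j' (resultant G0 G' \<theta>' j)"
    by (metis \<rho>j(2) \<rho>j'(2) subst_goal_Var subst_goal_comp_subst)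
  also have "\<dots> = subst_goal (comp_subst \<rho>i (comp_subst \<tau> \<rho>j')) (resultant G0 G \<theta> i)"
    by (simp add: loop \<rho>i(2)[symmetric] subst_goal_comp_subst)
  finally show False
    using assms(2) ij \<rho>i(1) \<open>renaming \<tau>\<close> \<rho>j'(1) renaming_comp_subst unfolding loop_free_def by blast
qed

lemma loop_free_cong:
  assumes "\<And>k. k \<le> n \<Longrightarrow> resultant G0 G' \<theta>' k = resultant G0 G \<theta> k" "loop_free G0 G \<theta> n"
  shows "loop_free G0 G' \<theta>' n"
  using assms unfolding loop_free_def by (metis less_imp_le order.trans)

lemma cut_loop:
  assumes "loop_free G0 G \<theta> m" "\<not> loop_free G0 G \<theta> (Suc m)"
  obtains i \<rho> where "i \<le> m" "loop_free G0 G \<theta> i" "renaming \<rho>"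
    "subst_goal \<rho> (resultant G0 G \<theta> (Suc m)) = resultant G0 G \<theta> i"
proof -
  obtain i j \<tau> where ij: "i < j" "j \<le> Suc m" "renaming \<tau>"
    "resultant G0 G \<theta> j = subst_goal \<tau> (resultant G0 G \<theta> i)"
    using assms(2) unfolding loop_free_def by blast
  have "j = Suc m"
    using assms(1) ij unfolding loop_free_def by (metis le_Suc_eq)
  obtain \<tau>' where \<tau>': "renaming \<tau>'" "comp_subst \<tau> \<tau>' = Var"
    using renaming_inverse[OF ij(3)] by blast
  have "subst_goal \<tau>' (resultant G0 G \<theta> (Suc m)) = resultant G0 G \<theta> i"
    using ij(4) \<open>j = Suc m\<close> by (simp add: \<tau>'(2) flip: subst_goal_comp_subst)
  moreover have "i \<le> m"
    using ij(1) \<open>j = Suc m\<close> by simp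
  ultimately show thesis
    using that loop_free_mono[OF assms(1)] \<tau>'(1) by blast
qed

lemma loop_removal:
  fixes G :: "nat \<Rightarrow> ('p, 'f, 'v) goal"
  assumes "infinite (UNIV :: 'v set)"
  shows "follows_skeleton P G0 s G c \<xi> \<theta> \<Longrightarrow> \<exists>s' G' c' \<xi>' \<theta>'. follows_skeleton P G0 s' G' c' \<xi>' \<theta>' \<and>
     loop_free G0 G' \<theta>' (length s') \<and>
     (\<exists>\<rho>. renaming \<rho> \<and> subst_goal \<rho> (resultant G0 G \<theta> (length s)) = resultant G0 G' \<theta>' (length s'))"
proof (induction s rule: rev_induct)
  case Nil
  then show ?case
    using renaming_Var by (fastforce simp: loop_free_def)
next
  case (snoc x s)
  then obtain s' G' c' \<xi>' \<theta>' \<rho> where D': "follows_skeleton P G0 s' G' c' \<xi>' \<theta>'"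
    "loop_free G0 G' \<theta>' (length s')" "renaming \<rho>"
    "subst_goal \<rho> (resultant G0 G \<theta> (length s)) = resultant G0 G' \<theta>' (length s')"
    by (auto simp: follows_skeleton_snoc)
  define m where "m = length s'"
  from follows_skeleton_extend[OF assms D'(1) snoc.prems D'(3,4)]
  obtain Gn \<xi>n \<theta>n r where
    ext: "follows_skeleton P G0 (s' @ [x]) (G'(Suc m := Gn)) (c'(m := snd x)) (\<xi>'(m := \<xi>n)) (\<theta>'(m := \<theta>n))"
    and r: "renaming r" "subst_goal r (resultant G0 G \<theta> (length (s @ [x])))
       = resultant G0 (G'(Suc m := Gn)) (\<theta>'(m := \<theta>n)) (Suc m)"
    unfolding m_def length_append_singleton by blast
  let ?G = "G'(Suc m := Gn)" and ?c = "c'(m := snd x)" and ?\<xi> = "\<xi>'(m := \<xi>n)" and ?\<theta> = "\<theta>'(m := \<theta>n)"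
  have "loop_free G0 ?G ?\<theta> m"
    by (rule loop_free_cong[OF _ D'(2)[folded m_def]]) (auto intro: resultant_cong)
  show ?case
  proof (cases "loop_free G0 ?G ?\<theta> (Suc m)")
    case True
    with ext r have "follows_skeleton P G0 (s' @ [x]) ?G ?c ?\<xi> ?\<theta> \<and>
        loop_free G0 ?G ?\<theta> (length (s' @ [x])) \<and>
        (\<exists>\<rho>. renaming \<rho> \<and>
          subst_goal \<rho> (resultant G0 G \<theta> (length (s @ [x]))) = resultant G0 ?G ?\<theta> (length (s' @ [x])))"
      by (auto simp: m_def)
    then show ?thesis
      by blast
  next
    case False
    from cut_loop[OF \<open>loop_free G0 ?G ?\<theta> m\<close> this]
    obtain i \<rho>' where i: "i \<le> m" "loop_free G0 ?G ?\<theta> i" "renaming \<rho>'"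
      "subst_goal \<rho>' (resultant G0 ?G ?\<theta> (Suc m)) = resultant G0 ?G ?\<theta> i"
      by blast
    then have "follows_skeleton P G0 (take i (s' @ [x])) ?G ?c ?\<xi> ?\<theta> \<and>
        loop_free G0 ?G ?\<theta> (length (take i (s' @ [x]))) \<and>
        (\<exists>\<rho>. renaming \<rho> \<and> subst_goal \<rho> (resultant G0 G \<theta> (length (s @ [x])))
          = resultant G0 ?G ?\<theta> (length (take i (s' @ [x]))))"
      using follows_skeleton_take[OF ext, of i] r renaming_comp_subst[OF r(1) i(3)]
      unfolding m_def by (auto simp: subst_goal_comp_subst)
    then show ?thesis
      by blast
  qed
qed

section \<open>The tree of loop-free skeletons\<close>

lemma Koenig_infinite_branch:
  fixes T :: "'a list set"
  assumes prefix_closed: "\<And>s x. s @ [x] \<in> T \<Longrightarrow> s \<in> T"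
    and finitely_branching: "\<And>s. finite {x. s @ [x] \<in> T}"
    and unbounded: "\<And>n. \<exists>s\<in>T. length s = n"
  obtains f where "\<And>n. map f [0..<n] \<in> T"
proof -
  have prefix: "s @ t \<in> T \<Longrightarrow> s \<in> T" for s t
    by (induction t rule: rev_induct) (auto intro: prefix_closed simp flip: append_assoc)
  define extendable where "extendable s \<longleftrightarrow> (\<forall>n. \<exists>t. length t = n \<and> s @ t \<in> T)" for s
  have extendable_step: "\<exists>x. extendable (s @ [x])" if "extendable s" for s
  proof (rule ccontr)
    assume "\<nexists>x. extendable (s @ [x])"
    then have "\<forall>x. \<exists>n. \<forall>t. length t = n \<longrightarrow> s @ [x] @ t \<notin> T"
      unfolding extendable_def by auto
    then obtain bound where bound: "\<And>x t. length t = bound x \<Longrightarrow> s @ [x] @ t \<notin> T"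
      by metis
    define N where "N = Max (bound ` {x. s @ [x] \<in> T})"
    obtain t where t: "length t = Suc N" "s @ t \<in> T"
      using \<open>extendable s\<close> unfolding extendable_def by blast
    then obtain x t' where "t = x # t'"
      by (cases t) auto
    with t have "s @ [x] \<in> T" "length t' = N" "s @ [x] @ take (bound x) t' \<in> T"
      using prefix[of "s @ [x]"] prefix[of "s @ [x] @ take (bound x) t'" "drop (bound x) t'"] by simp_all
    moreover from this have "bound x \<le> N"
      unfolding N_def using finitely_branching by simp
    ultimately show False
      using bound[of "take (bound x) t'" x] by simp
  qed
  have "\<exists>h. \<forall>n. (extendable (h n) \<and> length (h n) = n) \<and> (\<exists>x. h (Suc n) = h n @ [x])"
  proof (rule dependent_nat_choice)
    show "\<exists>s. extendable s \<and> length s = 0"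
      using unbounded unfolding extendable_def by auto
  next
    fix s n assume "extendable s \<and> length s = n"
    then show "\<exists>s'. (extendable s' \<and> length s' = Suc n) \<and> (\<exists>x. s' = s @ [x])"
      using extendable_step by fastforce
  qed
  then obtain h where h: "\<And>n. extendable (h n)" "\<And>n. length (h n) = n" "\<And>n. \<exists>x. h (Suc n) = h n @ [x]"
    by blast
  have "map (\<lambda>k. last (h (Suc k))) [0..<n] = h n" for n
  proof (induction n)
    case 0
    then show ?case
      using h(2)[of 0] by simp
  next
    case (Suc n)
    then show ?case
      using h(3)[of n] by auto
  qed
  moreover have "h n \<in> T" for n
    using h(1)[of n] unfolding extendable_def by (metis append_Nil2 length_0_conv)
  ultimately show thesis
    using that by metis
qed

definition loop_free_skeletons ::
  "('p, 'f, 'v) clause set \<Rightarrow> ('p, 'f, 'v) goal \<Rightarrow> (nat \<times> ('p, 'f, 'v) clause) list set" where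
  "loop_free_skeletons P G0 =
    {s. \<exists>G c \<xi> \<theta>. follows_skeleton P G0 s G c \<xi> \<theta> \<and> loop_free G0 G \<theta> (length s)}"

lemma loop_free_skeletons_prefix_closed:
  assumes "s @ [x] \<in> loop_free_skeletons P G0"
  shows "s \<in> loop_free_skeletons P G0"
proof -
  obtain G c \<xi> \<theta> where "follows_skeleton P G0 (s @ [x]) G c \<xi> \<theta>" "loop_free G0 G \<theta> (Suc (length s))"
    using assms unfolding loop_free_skeletons_def by auto
  then have "follows_skeleton P G0 s G c \<xi> \<theta>" "loop_free G0 G \<theta> (length s)"
    by (auto dest: follows_skeleton_snocD elim: loop_free_mono)
  then show ?thesis
    unfolding loop_free_skeletons_def by blast
qed

lemma loop_free_skeletons_finitely_branching:
  assumes "finite P"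
  shows "finite {x. s @ [x] \<in> loop_free_skeletons P G0}"
proof (cases "\<exists>x. s @ [x] \<in> loop_free_skeletons P G0")
  case True
  then obtain G c \<xi> \<theta> where D: "follows_skeleton P G0 s G c \<xi> \<theta>"
    unfolding loop_free_skeletons_def by (blast dest: follows_skeleton_snocD)
  have "{x. s @ [x] \<in> loop_free_skeletons P G0} \<subseteq> {..<length (G (length s))} \<times> P"
  proof
    fix x assume "x \<in> {x. s @ [x] \<in> loop_free_skeletons P G0}"
    then obtain G' c' \<xi>' \<theta>' where D': "follows_skeleton P G0 (s @ [x]) G' c' \<xi>' \<theta>'"
      unfolding loop_free_skeletons_def by blast
    obtain \<rho> where "subst_goal \<rho> (resultant G0 G' \<theta>' (length s)) = resultant G0 G \<theta> (length s)"
      using same_skeleton_variant_resultants[OF follows_skeleton_snocD[OF D'] D, where k = "length s"]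
      by auto
    then have "length (G' (length s)) = length (G (length s))"
      by (metis length_resultant subst_goal_simps(2) add_left_cancel)
    with D' show "x \<in> {..<length (G (length s))} \<times> P"
      by (cases x) (auto simp: follows_skeleton_snoc sld_step_at_def)
  qed
  with assms show ?thesis
    using finite_subset by blast
next
  case False
  then have "{x. s @ [x] \<in> loop_free_skeletons P G0} = {}"
    by blast
  then show ?thesis
    by (simp only: finite.emptyI)
qed

lemma loop_free_skeletons_unbounded:
  fixes G0 :: "('p, 'f, 'v) goal"
  assumes "infinite (UNIV :: 'v set)" "finite P"
    and "\<And>l. \<exists>n G c \<xi> \<theta>. sld_derivation_upto P G0 n G c \<xi> \<theta> \<and> (\<exists>k\<le>n. l < length (G k))"
  shows "\<exists>s\<in>loop_free_skeletons P G0. length s = d"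
proof -
  let ?M = "\<Sum>d\<in>P. length (snd d)"
  obtain n G c \<xi> \<theta> k where D: "sld_derivation_upto P G0 n G c \<xi> \<theta>" "k \<le> n"
    and long: "length G0 + d * ?M < length (G k)"
    using assms(3) by blast
  obtain s where s: "length s = k" "follows_skeleton P G0 s G c \<xi> \<theta>"
    using skeleton_exists[OF sld_derivation_upto_mono[OF D]] by blast
  from loop_removal[OF assms(1) s(2)]
  obtain s' G' c' \<xi>' \<theta>' \<rho> where D': "follows_skeleton P G0 s' G' c' \<xi>' \<theta>'"
    "loop_free G0 G' \<theta>' (length s')"
    "subst_goal \<rho> (resultant G0 G \<theta> (length s)) = resultant G0 G' \<theta>' (length s')"
    by blast
  then have "length (resultant G0 G' \<theta>' (length s')) = length (resultant G0 G \<theta> (length s))"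
    by (metis subst_goal_simps(2))
  then have "length (G' (length s')) = length (G k)"
    using s(1) by (simp add: length_resultant)
  moreover have "length (G' (length s')) \<le> length G0 + length s' * ?M"
    using length_goal_bound[OF assms(2), of G0 "length s'" G' c' \<xi>' \<theta>' "length s'"] D'(1)
    by (simp add: follows_skeleton_def)
  ultimately have "d * ?M < length s' * ?M"
    using long by linarith
  then have "d \<le> length s'"
    by (simp add: mult_less_cancel2)
  then have "take d s' \<in> loop_free_skeletons P G0"
    using follows_skeleton_take[OF D'(1), of d] loop_free_mono[OF D'(2), of d]
    unfolding loop_free_skeletons_def by (auto simp: min_absorb2)
  then show ?thesis
    using \<open>d \<le> length s'\<close> by (intro bexI[of _ "take d s'"]) simp_all
qed

lemma loop_free_if_loop_free_skeleton:
  assumes "s \<in> loop_free_skeletons P G0" "follows_skeleton P G0 s G c \<xi> \<theta>"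
  shows "loop_free G0 G \<theta> (length s)"
proof -
  obtain G' c' \<xi>' \<theta>' where D': "follows_skeleton P G0 s G' c' \<xi>' \<theta>'" "loop_free G0 G' \<theta>' (length s)"
    using assms(1) unfolding loop_free_skeletons_def by blast
  show ?thesis
    by (rule loop_free_variant[OF same_skeleton_variant_resultants[OF D'(1) assms(2)] D'(2)])
qed

lemma follows_skeleton_extend_realizable:
  fixes G :: "nat \<Rightarrow> ('p, 'f, 'v) goal"
  assumes "infinite (UNIV :: 'v set)" "follows_skeleton P G0 s G c \<xi> \<theta>"
    and E: "follows_skeleton P G0 (s @ [x]) G2 c2 \<xi>2 \<theta>2"
  obtains Gn \<xi>n \<theta>n where "follows_skeleton P G0 (s @ [x]) (G(Suc (length s) := Gn))
    (c(length s := snd x)) (\<xi>(length s := \<xi>n)) (\<theta>(length s := \<theta>n))"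
proof -
  obtain \<rho> where "renaming \<rho>"
    "subst_goal \<rho> (resultant G0 G2 \<theta>2 (length s)) = resultant G0 G \<theta> (length s)"
    using same_skeleton_variant_resultants[OF follows_skeleton_snocD[OF E] assms(2) order_refl]
    by blast
  from follows_skeleton_extend[OF assms(1,2) E this] show thesis
    using that by blast
qed

lemma diagonal_stable:
  assumes "\<And>n k. k \<le> n \<Longrightarrow> F (Suc n) k = F n k"
  shows "k \<le> n \<Longrightarrow> F n k = F k k"
proof (induction n rule: dec_induct)
  case (step n)
  then show ?case
    using assms by simp
qed simp

lemma infinite_skeleton_realized:
  fixes G0 :: "('p, 'f, 'v) goal"
  assumes inf: "infinite (UNIV :: 'v set)"
    and prefixes: "\<And>n. \<exists>G c \<xi> \<theta>. follows_skeleton P G0 (map f [0..<n]) G c \<xi> \<theta>"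
  obtains G c \<xi> \<theta> where "\<And>n. follows_skeleton P G0 (map f [0..<n]) G c \<xi> \<theta>"
proof -
  let ?s = "\<lambda>n. map f [0..<n]"
  \<comment> \<open>stage \<open>n + 1\<close> changes stage \<open>n\<close> only at the new step, so the diagonal follows every prefix\<close>
  have "\<exists>ds. \<forall>n. (\<lambda>(G, c, \<xi>, \<theta>). follows_skeleton P G0 (?s n) G c \<xi> \<theta>) (ds n) \<and>
      (\<lambda>(G, c, \<xi>, \<theta>) (G', c', \<xi>', \<theta>'). (\<forall>k\<le>n. G' k = G k) \<and>
        (\<forall>k<n. c' k = c k \<and> \<xi>' k = \<xi> k \<and> \<theta>' k = \<theta> k)) (ds n) (ds (Suc n))"
  proof (rule dependent_nat_choice)
    show "\<exists>D. (\<lambda>(G, c, \<xi>, \<theta>). follows_skeleton P G0 (?s 0) G c \<xi> \<theta>) D"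
      using prefixes[of 0] by auto
  next
    fix D n
    assume "(\<lambda>(G, c, \<xi>, \<theta>). follows_skeleton P G0 (?s n) G c \<xi> \<theta>) D"
    moreover obtain G c \<xi> \<theta> where D: "D = (G, c, \<xi>, \<theta>)"
      by (cases D) auto
    ultimately have "follows_skeleton P G0 (?s n) G c \<xi> \<theta>"
      by (simp add: D)
    moreover obtain G2 c2 \<xi>2 \<theta>2 where "follows_skeleton P G0 (?s n @ [f n]) G2 c2 \<xi>2 \<theta>2"
      using prefixes[of "Suc n"] by auto
    ultimately obtain Gn \<xi>n \<theta>n where "follows_skeleton P G0 (?s n @ [f n]) (G(Suc (length (?s n)) := Gn))
        (c(length (?s n) := snd (f n))) (\<xi>(length (?s n) := \<xi>n)) (\<theta>(length (?s n) := \<theta>n))"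
      by (rule follows_skeleton_extend_realizable[OF inf])
    then show "\<exists>D'. (\<lambda>(G, c, \<xi>, \<theta>). follows_skeleton P G0 (?s (Suc n)) G c \<xi> \<theta>) D' \<and>
      (\<lambda>(G, c, \<xi>, \<theta>) (G', c', \<xi>', \<theta>'). (\<forall>k\<le>n. G' k = G k) \<and>
        (\<forall>k<n. c' k = c k \<and> \<xi>' k = \<xi> k \<and> \<theta>' k = \<theta> k)) D D'"
      unfolding D by (intro exI[of _ "(G(Suc n := Gn), c(n := snd (f n)), \<xi>(n := \<xi>n), \<theta>(n := \<theta>n))"]) simp
  qed
  then obtain ds where ds: "\<forall>n. (\<lambda>(G, c, \<xi>, \<theta>). follows_skeleton P G0 (?s n) G c \<xi> \<theta>) (ds n) \<and>
      (\<lambda>(G, c, \<xi>, \<theta>) (G', c', \<xi>', \<theta>'). (\<forall>k\<le>n. G' k = G k) \<and>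
        (\<forall>k<n. c' k = c k \<and> \<xi>' k = \<xi> k \<and> \<theta>' k = \<theta> k)) (ds n) (ds (Suc n))" ..
  define Gs cs \<xi>s \<theta>s where "Gs n = fst (ds n)" and "cs n = fst (snd (ds n))"
    and "\<xi>s n = fst (snd (snd (ds n)))" and "\<theta>s n = snd (snd (snd (ds n)))" for n
  have ds_eq: "ds n = (Gs n, cs n, \<xi>s n, \<theta>s n)" for n
    by (simp add: Gs_def cs_def \<xi>s_def \<theta>s_def)
  have stage: "follows_skeleton P G0 (?s n) (Gs n) (cs n) (\<xi>s n) (\<theta>s n)" for n
    using ds[rule_format, of n] by (simp add: ds_eq)
  have G_step: "Gs (Suc n) k = Gs n k" and c_step: "cs (Suc (Suc n)) k = cs (Suc n) k"
    and \<xi>_step: "\<xi>s (Suc (Suc n)) k = \<xi>s (Suc n) k" and \<theta>_step: "\<theta>s (Suc (Suc n)) k = \<theta>s (Suc n) k"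
    if "k \<le> n" for n k
    using that ds[rule_format, of n] ds[rule_format, of "Suc n"] by (simp_all add: ds_eq)
  have diagonal: "Gs n k = Gs k k" "cs (Suc n) k = cs (Suc k) k"
    "\<xi>s (Suc n) k = \<xi>s (Suc k) k" "\<theta>s (Suc n) k = \<theta>s (Suc k) k" if "k \<le> n" for n k
    using diagonal_stable[where F = Gs, OF G_step that]
      diagonal_stable[where F = "\<lambda>n. cs (Suc n)", OF c_step that]
      diagonal_stable[where F = "\<lambda>n. \<xi>s (Suc n)", OF \<xi>_step that]
      diagonal_stable[where F = "\<lambda>n. \<theta>s (Suc n)", OF \<theta>_step that] by simp_all
  have "follows_skeleton P G0 (?s n) (\<lambda>k. Gs k k) (\<lambda>k. cs (Suc k) k) (\<lambda>k. \<xi>s (Suc k) k)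
      (\<lambda>k. \<theta>s (Suc k) k)" for n
  proof (rule follows_skeleton_cong[OF stage[of n]])
    show "Gs k k = Gs n k" if "k \<le> length (?s n)" for k
      using diagonal(1)[of k n] that by simp
    show "cs (Suc k) k = cs n k \<and> \<xi>s (Suc k) k = \<xi>s n k \<and> \<theta>s (Suc k) k = \<theta>s n k"
      if "k < length (?s n)" for k
      using diagonal(2-4)[of k "n - 1"] that by simp
  qed
  then show thesis
    by (rule that)
qed

lemma infinite_branch_unpruned_derivation:
  fixes G0 :: "('p, 'f, 'v) goal"
  assumes "infinite (UNIV :: 'v set)"
    and branch: "\<And>n. map f [0..<n] \<in> loop_free_skeletons P G0"
  shows "\<exists>G c \<xi> \<theta>. sld_derivation_inf P G0 G c \<xi> \<theta> \<and> \<not> pruned_EVR_L G0 G \<theta>"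
proof -
  have "\<exists>G c \<xi> \<theta>. follows_skeleton P G0 (map f [0..<n]) G c \<xi> \<theta>" for n
    using branch unfolding loop_free_skeletons_def by blast
  from infinite_skeleton_realized[OF assms(1) this]
  obtain G c \<xi> \<theta> where follows: "\<And>n. follows_skeleton P G0 (map f [0..<n]) G c \<xi> \<theta>"
    by blast
  have "sld_derivation_inf P G0 G c \<xi> \<theta>"
    using follows by (simp add: sld_derivation_inf_def follows_skeleton_def)
  moreover have "loop_free G0 G \<theta> n" for n
    using loop_free_if_loop_free_skeleton[OF branch follows, of n] by simp
  then have "\<not> pruned_EVR_L G0 G \<theta>"
    unfolding pruned_EVR_L_iff_resultant loop_free_def by blast
  ultimately show ?thesis
    by blast
qed

theorem lemmaL1p2p1:
  fixes P :: "('p, 'f, 'v) clause set" and G0 :: "('p, 'f, 'v) goal"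
  assumes "infinite (UNIV :: 'v set)"
    and "finite P"
    and "\<And>G c \<xi> \<theta>. sld_derivation_inf P G0 G c \<xi> \<theta> \<Longrightarrow> pruned_EVR_L G0 G \<theta>"
  shows "\<exists>l::nat. \<forall>n G c \<xi> \<theta>. sld_derivation_upto P G0 n G c \<xi> \<theta> \<longrightarrow>
           (\<forall>k\<le>n. length (G k) \<le> l)"
proof (rule ccontr)
  assume "\<not> ?thesis"
  then have unbounded:
    "\<exists>n G c \<xi> \<theta>. sld_derivation_upto P G0 n G c \<xi> \<theta> \<and> (\<exists>k\<le>n. l < length (G k))" for l
    by (meson not_le)
  have "\<exists>f. \<forall>n. map f [0..<n] \<in> loop_free_skeletons P G0"
  proof (rule Koenig_infinite_branch)
    show "s \<in> loop_free_skeletons P G0" if "s @ [x] \<in> loop_free_skeletons P G0" for s x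
      using that by (rule loop_free_skeletons_prefix_closed)
    show "finite {x. s @ [x] \<in> loop_free_skeletons P G0}" for s
      using assms(2) by (rule loop_free_skeletons_finitely_branching)
    show "\<exists>s\<in>loop_free_skeletons P G0. length s = n" for n
      by (rule loop_free_skeletons_unbounded[OF assms(1,2) unbounded])
  qed blast
  then show False
    using infinite_branch_unpruned_derivation[OF assms(1)] assms(3) by blast
qed

end
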